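(* Suppose that $\mathcal R$ is strictly monotone, i.e., for $Z,Z'\in L_p(\Omega,\mathcal F,P)$ with $Z'\succ Z$ one has $\mathcal R(Z')>\mathcal R(Z)$. Then for every $A\in\mathcal F$ with $P(A)>0$ there exists $\varepsilon>0$ such that $Q(A)\ge\varepsilon$ for every $Q\in\mathfrak M$.
   Context: Let $(\Omega,\mathcal F,P)$ be a probability space, $p\in[1,\infty)$, $1/p+1/q=1$. Let $\mathfrak M$ be a nonempty set of probability measures $Q\ll P$ on $(\Omega,\mathcal F)$ such that the set of densities $\mathfrak A=\{dQ/dP: Q\in\mathfrak M\}\subset L_q(\Omega,\mathcal F,P)$ is convex, bounded in $\|\cdot\|_q$, and closed in the weak$^*$ topology $\sigma(L_q,L_p)$. Define $\mathcal R(Z)=\sup_{Q\in\mathfrak M}\mathbb E_Q[Z]$ for $Z\in L_p(\Omega,\mathcal F,P)$. Notation: $Z'\succ Z$ means $Z'\ge Z$ $P$-a.s. and $P\{Z'>Z\}>0$. *)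

theory Defs
  imports "HOL-Probability.Probability"
begin

text \<open>Setting: P is the probability measure M on (space M, sets M); 1 \<le> p < \<infinity>,
  and q is the conjugate exponent (q = \<infinity> when p = 1, q = p/(p-1) otherwise).\<close>

definition Lp_space :: "'a measure \<Rightarrow> real \<Rightarrow> ('a \<Rightarrow> real) set" where
  "Lp_space M p = {Z. Z \<in> borel_measurable M \<and> integrable M (\<lambda>x. \<bar>Z x\<bar> powr p)}"

definition conj_exp :: "real \<Rightarrow> ereal" where
  "conj_exp p = (if p = 1 then \<infinity> else ereal (p / (p - 1)))"

definition Lq_space :: "'a measure \<Rightarrow> real \<Rightarrow> ('a \<Rightarrow> real) set" where
  "Lq_space M p = {f. f \<in> borel_measurable M \<and>
     (case conj_exp p of
        ereal q \<Rightarrow> integrable M (\<lambda>x. \<bar>f x\<bar> powr q)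
      | _ \<Rightarrow> esssup M (\<lambda>x. ereal \<bar>f x\<bar>) < \<infinity>)}"

definition Lq_norm :: "'a measure \<Rightarrow> real \<Rightarrow> ('a \<Rightarrow> real) \<Rightarrow> real" where
  "Lq_norm M p f =
     (case conj_exp p of
        ereal q \<Rightarrow> (\<integral>x. \<bar>f x\<bar> powr q \<partial>M) powr (1 / q)
      | _ \<Rightarrow> real_of_ereal (esssup M (\<lambda>x. ereal \<bar>f x\<bar>)))"

text \<open>The set of densities dQ/dP, Q in the family, taken with all of their
  (P-a.e. equal) versions, so that properties of the set of equivalence classes
  are expressed on this set of functions.\<close>
definition densities :: "'a measure \<Rightarrow> 'a measure set \<Rightarrow> ('a \<Rightarrow> real) set" where
  "densities M \<MM> = {f. f \<in> borel_measurable M \<and> (AE x in M. f x \<ge> 0) \<and>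
       (\<exists>Q\<in>\<MM>. Q = density M (\<lambda>x. ennreal (f x)))}"

definition convex_fset :: "('a \<Rightarrow> real) set \<Rightarrow> bool" where
  "convex_fset S \<longleftrightarrow> (\<forall>f\<in>S. \<forall>g\<in>S. \<forall>t::real. 0 \<le> t \<and> t \<le> 1 \<longrightarrow>
      (\<lambda>x. t * f x + (1 - t) * g x) \<in> S)"

definition Lq_bounded :: "'a measure \<Rightarrow> real \<Rightarrow> ('a \<Rightarrow> real) set \<Rightarrow> bool" where
  "Lq_bounded M p S \<longleftrightarrow> S \<subseteq> Lq_space M p \<and> (\<exists>C. \<forall>f\<in>S. Lq_norm M p f \<le> C)"

text \<open>Closedness in the weak* topology \<sigma>(L_q, L_p) (on a.e.-equivalence classes):
  every g in L_q lying in the weak* closure of S (every basic weak* neighbourhood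
  of g meets S) is a.e. equal to some element of S.\<close>
definition weak_star_closed :: "'a measure \<Rightarrow> real \<Rightarrow> ('a \<Rightarrow> real) set \<Rightarrow> bool" where
  "weak_star_closed M p S \<longleftrightarrow>
     (\<forall>g\<in>Lq_space M p.
        (\<forall>F e. finite F \<and> F \<subseteq> Lp_space M p \<and> e > 0 \<longrightarrow>
           (\<exists>f\<in>S. \<forall>Z\<in>F. \<bar>(\<integral>x. f x * Z x \<partial>M) - (\<integral>x. g x * Z x \<partial>M)\<bar> < e))
        \<longrightarrow> (\<exists>f\<in>S. AE x in M. f x = g x))"

definition risk :: "'a measure set \<Rightarrow> ('a \<Rightarrow> real) \<Rightarrow> real" where
  "risk \<MM> Z = (SUP Q\<in>\<MM>. \<integral>x. Z x \<partial>Q)"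

definition strictly_monotone :: "'a measure \<Rightarrow> real \<Rightarrow> (('a \<Rightarrow> real) \<Rightarrow> real) \<Rightarrow> bool" where
  "strictly_monotone M p R \<longleftrightarrow>
     (\<forall>Z\<in>Lp_space M p. \<forall>Z'\<in>Lp_space M p.
        (AE x in M. Z' x \<ge> Z x) \<and> measure M {x\<in>space M. Z' x > Z x} > 0 \<longrightarrow> R Z' > R Z)"

end

theory Submission
  imports Defs
begin

text \<open>Compare the positions \<open>-1\<^sub>A\<close> and \<open>0\<close>: since \<open>0 \<succ> -1\<^sub>A\<close> when \<open>P(A) > 0\<close>, strict
  monotonicity gives \<open>sup\<^sub>Q (-Q(A)) = \<R>(-1\<^sub>A) < \<R>(0) = 0\<close>, i.e. \<open>inf\<^sub>Q Q(A) > 0\<close>.\<close>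

lemma zero_in_Lp_space: "(\<lambda>_. 0 :: real) \<in> Lp_space M p"
  unfolding Lp_space_def by simp

lemma uminus_indicator_in_Lp_space:
  assumes "finite_measure M" "A \<in> sets M" "p > 0"
  shows "(\<lambda>x. - indicator A x :: real) \<in> Lp_space M p"
proof -
  interpret finite_measure M by fact
  have "(\<lambda>x. \<bar>- indicator A x :: real\<bar> powr p) = indicator A"
    using \<open>p > 0\<close> by (auto simp: indicator_def)
  moreover have "integrable M (indicator A :: 'a \<Rightarrow> real)"
    using \<open>A \<in> sets M\<close> by (simp add: integrable_indicator_iff less_top[symmetric])
  ultimately show ?thesis
    using \<open>A \<in> sets M\<close> unfolding Lp_space_def by simp
qed

lemma risk_zero: "\<MM> \<noteq> {} \<Longrightarrow> risk \<MM> (\<lambda>_. 0) = 0"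
  unfolding risk_def by simp

lemma uniform_lower_bound_if_risk_uminus_indicator_neg:
  assumes "\<forall>Q\<in>\<MM>. finite_measure Q \<and> A \<in> sets Q"
    and "risk \<MM> (\<lambda>x. - indicator A x) < 0"
  shows "\<exists>\<epsilon>>0. \<forall>Q\<in>\<MM>. measure Q A \<ge> \<epsilon>"
proof -
  have integral_eq: "(\<integral>x. - indicator A x \<partial>Q) = - measure Q A" if "Q \<in> \<MM>" for Q
  proof -
    interpret finite_measure Q using assms(1) that by blast
    show ?thesis using assms(1) that by simp
  qed
  have "bdd_above ((\<lambda>Q. \<integral>x. - indicat_real A x \<partial>Q) ` \<MM>)"
    by (rule bdd_aboveI[of _ 0]) (auto simp: integral_eq)
  then have "- measure Q A \<le> risk \<MM> (\<lambda>x. - indicator A x)" if "Q \<in> \<MM>" for Q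
    unfolding risk_def using cSUP_upper[OF that] integral_eq[OF that] by metis
  then show ?thesis
    using assms(2) by (intro exI[of _ "- risk \<MM> (\<lambda>x. - indicator A x)"]) force
qed

theorem proposition3p8:
  fixes M :: "'a measure" and p :: real and \<MM> :: "'a measure set"
  assumes "prob_space M"
    and "1 \<le> p"
    and "\<MM> \<noteq> {}"
    and "\<forall>Q\<in>\<MM>. prob_space Q \<and> sets Q = sets M \<and> absolutely_continuous M Q"
    and "convex_fset (densities M \<MM>)"
    and "Lq_bounded M p (densities M \<MM>)"
    and "weak_star_closed M p (densities M \<MM>)"
    and "strictly_monotone M p (risk \<MM>)"
  shows "\<forall>A\<in>sets M. measure M A > 0 \<longrightarrow> (\<exists>\<epsilon>>0. \<forall>Q\<in>\<MM>. measure Q A \<ge> \<epsilon>)"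
proof (intro ballI impI)
  fix A assume A: "A \<in> sets M" and "measure M A > 0"
  interpret prob_space M by fact
  have "{x \<in> space M. - indicat_real A x < 0} = A"
    using sets.sets_into_space[OF A] by (auto simp: indicator_def)
  then have "measure M {x \<in> space M. - indicat_real A x < 0} > 0"
    using \<open>measure M A > 0\<close> by simp
  moreover have "(\<lambda>x. - indicat_real A x) \<in> Lp_space M p"
    using uminus_indicator_in_Lp_space[OF finite_measure_axioms A] \<open>1 \<le> p\<close> by simp
  ultimately have "risk \<MM> (\<lambda>x. - indicator A x) < risk \<MM> (\<lambda>_. 0)"
    using assms(8) zero_in_Lp_space unfolding strictly_monotone_def
    by (elim ballE[of _ _ "\<lambda>x. - indicat_real A x"] ballE[of _ _ "\<lambda>_. 0"]) auto
  then show "\<exists>\<epsilon>>0. \<forall>Q\<in>\<MM>. measure Q A \<ge> \<epsilon>"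
    using assms(4) A risk_zero[OF \<open>\<MM> \<noteq> {}\<close>]
    by (intro uniform_lower_bound_if_risk_uminus_indicator_neg)
      (auto intro: prob_space.finite_measure)
qed

end
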